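(* Let $\mathcal{P}=\langle \mathrm{Pr},A,\to\rangle$ be a process LTS and $\mathcal{E}=\langle \mathrm{Env},A,\Rightarrow\rangle$ an environment LTS. For all processes $p,q\in\mathrm{Pr}$ and all environments $e\in\mathrm{Env}$: (1) $p \le_e q \iff (p \mathbin{\&_\bullet} e) \le (q \mathbin{\&_\bullet} e) \implies (p \mathbin{\&} e)\le (q\mathbin{\&} e) \iff p \le^{ji}_e q$; (2) $p \sim_e q \iff (p \mathbin{\&_\bullet} e) \sim (q \mathbin{\&_\bullet} e) \implies (p \mathbin{\&} e)\sim (q\mathbin{\&} e) \iff p \sim^{ji}_e q$. Here $p\mathbin{\&_\bullet}e$, $q\mathbin{\&_\bullet}e$ are states of the right-determinizing join LTS $\mathcal{P}\mathbin{\&_\bullet}\mathcal{E}$ and $p\mathbin{\&}e$, $q\mathbin{\&}e$ are states of the join LTS $\mathcal{P}\mathbin{\&}\mathcal{E}$; $\le$ and $\sim$ denote simulatability and bisimilarity in the respective LTS.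
   Context: A labeled transition system (LTS) is a triple $\langle \mathrm{St},A,\to\rangle$ with a set of states $\mathrm{St}$, a set of actions $A$, and a transition relation $\to\subseteq \mathrm{St}\times A\times \mathrm{St}$; write $s\xrightarrow{a}t$. A process LTS $\mathcal{P}=\langle \mathrm{Pr},A,\to\rangle$ has states called processes; an environment LTS $\mathcal{E}=\langle\mathrm{Env},A,\Rightarrow\rangle$ (same action set) has states called environments, transitions written $e\xRightarrow{a}e'$. A simulation on an LTS is a nonempty relation $S$ on states such that whenever $s\,S\,t$ and $s\xrightarrow{a}s'$, there is $t'$ with $t\xrightarrow{a}t'$ and $s'\,S\,t'$ (forth). A bisimulation is a nonempty relation $B$ such that both $B$ and its converse are simulations (forth and back). $s\le t$ (simulatability) iff some simulation relates $s$ to $t$; $s\sim t$ (bisimilarity) iff some bisimulation relates them. An $\mathcal{E}$-parameterized simulation on $\mathcal{P}$ is a family $(S_f)_{f\in\mathrm{Env}}$ of nonempty relations $S_f\subseteq\mathrm{Pr}\times\mathrm{Pr}$ such that whenever $p\,S_e\,q$ and $e\xRightarrow{a}e'$ and $p\xrightarrow{a}p'$, there is $q'$ with $q\xrightarrow{a}q'$ and $p'\,S_{e'}\,q'$. An $\mathcal{E}$-parameterized bisimulation is a family $(B_f)_{f\in\mathrm{Env}}$ of nonempty relations such that whenever $p\,B_e\,q$ and $e\xRightarrow{a}e'$: (forth) every $p\xrightarrow{a}p'$ is matched by some $q\xrightarrow{a}q'$ with $p'\,B_{e'}\,q'$, and (back) every $q\xrightarrow{a}q'$ is matched by some $p\xrightarrow{a}p'$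 with $p'\,B_{e'}\,q'$. Write $p\le_e q$ (parameterized simulatability) if some $\mathcal{E}$-parameterized simulation has $p\,S_e\,q$, and $p\sim_e q$ (parameterized bisimilarity) if some $\mathcal{E}$-parameterized bisimulation has $p\,B_e\,q$. The join LTS of two LTSs $\langle \mathrm{St}_1,A,\to_1\rangle$, $\langle \mathrm{St}_2,A,\to_2\rangle$ has states formal pairs $s_1\mathbin{\&}s_2$ ($s_i\in\mathrm{St}_i$) and transitions $s_1\mathbin{\&}s_2\xrightarrow{a}s_1'\mathbin{\&}s_2'$ iff $s_1\xrightarrow{a}_1 s_1'$ and $s_2\xrightarrow{a}_2 s_2'$. The right-determinizing join LTS $\mathcal{P}\mathbin{\&_\bullet}\mathcal{E}$ has states $p\mathbin{\&_\bullet}e$, action set $A\times\mathrm{Env}$, and transitions $p\mathbin{\&_\bullet}e\xrightarrow{(a,e')}p'\mathbin{\&_\bullet}e'$ iff $p\xrightarrow{a}p'$ and $e\xRightarrow{a}e'$. Ji-parameterized relations: $p\le^{ji}_e q$ iff $p\mathbin{\&}e\le q\mathbin{\&}e$ in $\mathcal{P}\mathbin{\&}\mathcal{E}$; $p\sim^{ji}_e q$ iff $p\mathbin{\&}e\sim q\mathbin{\&}e$; $p\simeq^{ji}_e q$ iff $p\le^{ji}_e q$ and $q\le^{ji}_e p$. *)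

theory Defs
  imports Main
begin

definition simulation :: "('s \<Rightarrow> 'a \<Rightarrow> 's \<Rightarrow> bool) \<Rightarrow> ('s \<Rightarrow> 's \<Rightarrow> bool) \<Rightarrow> bool" where
  "simulation T R \<longleftrightarrow> (\<exists>s t. R s t) \<and>
     (\<forall>s t a s'. R s t \<and> T s a s' \<longrightarrow> (\<exists>t'. T t a t' \<and> R s' t'))"

definition bisimulation :: "('s \<Rightarrow> 'a \<Rightarrow> 's \<Rightarrow> bool) \<Rightarrow> ('s \<Rightarrow> 's \<Rightarrow> bool) \<Rightarrow> bool" where
  "bisimulation T R \<longleftrightarrow> simulation T R \<and> simulation T (conversep R)"

definition simulatable :: "('s \<Rightarrow> 'a \<Rightarrow> 's \<Rightarrow> bool) \<Rightarrow> 's \<Rightarrow> 's \<Rightarrow> bool" where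
  "simulatable T s t \<longleftrightarrow> (\<exists>R. simulation T R \<and> R s t)"

definition bisimilar :: "('s \<Rightarrow> 'a \<Rightarrow> 's \<Rightarrow> bool) \<Rightarrow> 's \<Rightarrow> 's \<Rightarrow> bool" where
  "bisimilar T s t \<longleftrightarrow> (\<exists>R. bisimulation T R \<and> R s t)"

definition join_lts :: "('s1 \<Rightarrow> 'a \<Rightarrow> 's1 \<Rightarrow> bool) \<Rightarrow> ('s2 \<Rightarrow> 'a \<Rightarrow> 's2 \<Rightarrow> bool)
    \<Rightarrow> ('s1 \<times> 's2) \<Rightarrow> 'a \<Rightarrow> ('s1 \<times> 's2) \<Rightarrow> bool" where
  "join_lts T1 T2 s a t \<longleftrightarrow> T1 (fst s) a (fst t) \<and> T2 (snd s) a (snd t)"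

definition rdjoin_lts :: "('p \<Rightarrow> 'a \<Rightarrow> 'p \<Rightarrow> bool) \<Rightarrow> ('e \<Rightarrow> 'a \<Rightarrow> 'e \<Rightarrow> bool)
    \<Rightarrow> ('p \<times> 'e) \<Rightarrow> ('a \<times> 'e) \<Rightarrow> ('p \<times> 'e) \<Rightarrow> bool" where
  "rdjoin_lts P E s ae t \<longleftrightarrow>
     P (fst s) (fst ae) (fst t) \<and> E (snd s) (fst ae) (snd t) \<and> snd ae = snd t"

definition param_simulation :: "('p \<Rightarrow> 'a \<Rightarrow> 'p \<Rightarrow> bool) \<Rightarrow> ('e \<Rightarrow> 'a \<Rightarrow> 'e \<Rightarrow> bool)
    \<Rightarrow> ('e \<Rightarrow> 'p \<Rightarrow> 'p \<Rightarrow> bool) \<Rightarrow> bool" where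
  "param_simulation P E S \<longleftrightarrow> (\<forall>f. \<exists>p q. S f p q) \<and>
     (\<forall>p q e e' a p'. S e p q \<and> E e a e' \<and> P p a p' \<longrightarrow> (\<exists>q'. P q a q' \<and> S e' p' q'))"

definition param_bisimulation :: "('p \<Rightarrow> 'a \<Rightarrow> 'p \<Rightarrow> bool) \<Rightarrow> ('e \<Rightarrow> 'a \<Rightarrow> 'e \<Rightarrow> bool)
    \<Rightarrow> ('e \<Rightarrow> 'p \<Rightarrow> 'p \<Rightarrow> bool) \<Rightarrow> bool" where
  "param_bisimulation P E B \<longleftrightarrow> (\<forall>f. \<exists>p q. B f p q) \<and>
     (\<forall>p q e e' a. B e p q \<and> E e a e' \<longrightarrow>
        (\<forall>p'. P p a p' \<longrightarrow> (\<exists>q'. P q a q' \<and> B e' p' q')) \<and>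
        (\<forall>q'. P q a q' \<longrightarrow> (\<exists>p'. P p a p' \<and> B e' p' q')))"

definition param_simulatable :: "('p \<Rightarrow> 'a \<Rightarrow> 'p \<Rightarrow> bool) \<Rightarrow> ('e \<Rightarrow> 'a \<Rightarrow> 'e \<Rightarrow> bool)
    \<Rightarrow> 'e \<Rightarrow> 'p \<Rightarrow> 'p \<Rightarrow> bool" where
  "param_simulatable P E e p q \<longleftrightarrow> (\<exists>S. param_simulation P E S \<and> S e p q)"

definition param_bisimilar :: "('p \<Rightarrow> 'a \<Rightarrow> 'p \<Rightarrow> bool) \<Rightarrow> ('e \<Rightarrow> 'a \<Rightarrow> 'e \<Rightarrow> bool)
    \<Rightarrow> 'e \<Rightarrow> 'p \<Rightarrow> 'p \<Rightarrow> bool" where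
  "param_bisimilar P E e p q \<longleftrightarrow> (\<exists>B. param_bisimulation P E B \<and> B e p q)"

definition ji_simulatable :: "('p \<Rightarrow> 'a \<Rightarrow> 'p \<Rightarrow> bool) \<Rightarrow> ('e \<Rightarrow> 'a \<Rightarrow> 'e \<Rightarrow> bool)
    \<Rightarrow> 'e \<Rightarrow> 'p \<Rightarrow> 'p \<Rightarrow> bool" where
  "ji_simulatable P E e p q \<longleftrightarrow> simulatable (join_lts P E) (p, e) (q, e)"

definition ji_bisimilar :: "('p \<Rightarrow> 'a \<Rightarrow> 'p \<Rightarrow> bool) \<Rightarrow> ('e \<Rightarrow> 'a \<Rightarrow> 'e \<Rightarrow> bool)
    \<Rightarrow> 'e \<Rightarrow> 'p \<Rightarrow> 'p \<Rightarrow> bool" where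
  "ji_bisimilar P E e p q \<longleftrightarrow> bisimilar (join_lts P E) (p, e) (q, e)"

end

theory Submission
  imports Defs
begin

text \<open>A parameterized relation S corresponds to the relation on pairs that relates
  (p, f) with (q, f) whenever S f p q. An environment step e \<Rightarrow>a e' of the right-determinizing
  join is visible in its label (a, e'), so matching a step there fixes the environment move
  exactly as the parameterized transfer condition does. Conversely a simulation R on pairs is
  sliced back along the diagonal. Bisimulations reduce to simulations via converses, and the
  join LTS is the right-determinizing join with the environment component of the label
  forgotten, which can only make simulating easier.\<close>

definition pair_rel :: "('e \<Rightarrow> 'p \<Rightarrow> 'p \<Rightarrow> bool) \<Rightarrow> 'p \<times> 'e \<Rightarrow> 'p \<times> 'e \<Rightarrow> bool" where
  "pair_rel S s t \<longleftrightarrow> snd s = snd t \<and> S (snd s) (fst s) (fst t)"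

text \<open>The identity is added to make every slice nonempty, as parameterized simulations demand.\<close>
definition slice_rel :: "('p \<times> 'e \<Rightarrow> 'p \<times> 'e \<Rightarrow> bool) \<Rightarrow> 'e \<Rightarrow> 'p \<Rightarrow> 'p \<Rightarrow> bool" where
  "slice_rel R f p q \<longleftrightarrow> R (p, f) (q, f) \<or> p = q"

lemma pair_rel_conversep: "pair_rel (\<lambda>f. (S f)\<inverse>\<inverse>) = (pair_rel S)\<inverse>\<inverse>"
  by (auto simp: fun_eq_iff pair_rel_def)

lemma slice_rel_conversep: "slice_rel R\<inverse>\<inverse> = (\<lambda>f. (slice_rel R f)\<inverse>\<inverse>)"
  by (auto simp: fun_eq_iff slice_rel_def)

lemma param_bisimulation_iff:
  "param_bisimulation P E B \<longleftrightarrow>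
     param_simulation P E B \<and> param_simulation P E (\<lambda>f. (B f)\<inverse>\<inverse>)"
  unfolding param_bisimulation_def param_simulation_def by (auto 0 3)

lemma simulation_rdjoin_pair_rel:
  assumes "param_simulation P E S"
  shows "simulation (rdjoin_lts P E) (pair_rel S)"
  unfolding simulation_def
proof (intro conjI allI impI)
  obtain p q where "S undefined p q"
    using assms unfolding param_simulation_def by blast
  then show "\<exists>s t. pair_rel S s t"
    by (auto simp: pair_rel_def)
next
  fix s t ae s'
  assume "pair_rel S s t \<and> rdjoin_lts P E s ae s'"
  then have "S (snd s) (fst s) (fst t)" "E (snd s) (fst ae) (snd s')"
      "P (fst s) (fst ae) (fst s')" "snd t = snd s" "snd ae = snd s'"
    by (auto simp: pair_rel_def rdjoin_lts_def)
  moreover obtain q' where "P (fst t) (fst ae) q'" "S (snd s') (fst s') q'"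
    using assms calculation(1-3) unfolding param_simulation_def by blast
  ultimately show "\<exists>t'. rdjoin_lts P E t ae t' \<and> pair_rel S s' t'"
    by (intro exI[of _ "(q', snd s')"]) (auto simp: pair_rel_def rdjoin_lts_def)
qed

lemma param_simulation_slice_rel:
  assumes "simulation (rdjoin_lts P E) R"
  shows "param_simulation P E (slice_rel R)"
  unfolding param_simulation_def
proof (intro conjI allI impI)
  fix f
  show "\<exists>p q. slice_rel R f p q"
    by (auto simp: slice_rel_def)
next
  fix p q e e' a p'
  assume step: "slice_rel R e p q \<and> E e a e' \<and> P p a p'"
  show "\<exists>q'. P q a q' \<and> slice_rel R e' p' q'"
  proof (cases "p = q")
    case True
    with step show ?thesis
      by (auto simp: slice_rel_def)
  next
    case False
    with step have "R (p, e) (q, e)" "rdjoin_lts P E (p, e) (a, e') (p', e')"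
      by (auto simp: slice_rel_def rdjoin_lts_def)
    then obtain t' where "rdjoin_lts P E (q, e) (a, e') t'" "R (p', e') t'"
      using assms unfolding simulation_def by blast
    then show ?thesis
      by (intro exI[of _ "fst t'"]) (cases t', auto simp: rdjoin_lts_def slice_rel_def)
  qed
qed

lemma param_simulatable_iff_rdjoin:
  "param_simulatable P E e p q \<longleftrightarrow> simulatable (rdjoin_lts P E) (p, e) (q, e)"
proof
  assume "param_simulatable P E e p q"
  then obtain S where "param_simulation P E S" "S e p q"
    by (auto simp: param_simulatable_def)
  then show "simulatable (rdjoin_lts P E) (p, e) (q, e)"
    unfolding simulatable_def
    by (intro exI[of _ "pair_rel S"]) (simp add: simulation_rdjoin_pair_rel pair_rel_def)
next
  assume "simulatable (rdjoin_lts P E) (p, e) (q, e)"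
  then obtain R where "simulation (rdjoin_lts P E) R" "R (p, e) (q, e)"
    by (auto simp: simulatable_def)
  then show "param_simulatable P E e p q"
    unfolding param_simulatable_def
    by (intro exI[of _ "slice_rel R"]) (simp add: param_simulation_slice_rel slice_rel_def)
qed

lemma param_bisimilar_iff_rdjoin:
  "param_bisimilar P E e p q \<longleftrightarrow> bisimilar (rdjoin_lts P E) (p, e) (q, e)"
proof
  assume "param_bisimilar P E e p q"
  then obtain B where "param_bisimulation P E B" "B e p q"
    by (auto simp: param_bisimilar_def)
  then show "bisimilar (rdjoin_lts P E) (p, e) (q, e)"
    unfolding bisimilar_def bisimulation_def param_bisimulation_iff
    by (intro exI[of _ "pair_rel B"])
      (simp add: simulation_rdjoin_pair_rel pair_rel_def flip: pair_rel_conversep)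
next
  assume "bisimilar (rdjoin_lts P E) (p, e) (q, e)"
  then obtain R where "bisimulation (rdjoin_lts P E) R" "R (p, e) (q, e)"
    by (auto simp: bisimilar_def)
  then show "param_bisimilar P E e p q"
    unfolding param_bisimilar_def param_bisimulation_iff bisimulation_def
    by (intro exI[of _ "slice_rel R"])
      (simp add: param_simulation_slice_rel slice_rel_def flip: slice_rel_conversep)
qed

lemma simulation_relabel:
  assumes "simulation T R"
  shows "simulation (\<lambda>s a t. \<exists>b. T s b t \<and> h b = a) R"
  using assms unfolding simulation_def by blast

lemma bisimulation_relabel:
  assumes "bisimulation T R"
  shows "bisimulation (\<lambda>s a t. \<exists>b. T s b t \<and> h b = a) R"
  using assms unfolding bisimulation_def by (simp add: simulation_relabel)

lemma join_lts_relabel_rdjoin: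
  "join_lts P E = (\<lambda>s a t. \<exists>b. rdjoin_lts P E s b t \<and> fst b = a)"
  by (fastforce simp: fun_eq_iff join_lts_def rdjoin_lts_def)

lemma simulatable_rdjoin_imp_join:
  "simulatable (rdjoin_lts P E) s t \<Longrightarrow> simulatable (join_lts P E) s t"
  unfolding simulatable_def join_lts_relabel_rdjoin by (blast intro: simulation_relabel)

lemma bisimilar_rdjoin_imp_join:
  "bisimilar (rdjoin_lts P E) s t \<Longrightarrow> bisimilar (join_lts P E) s t"
  unfolding bisimilar_def join_lts_relabel_rdjoin by (blast intro: bisimulation_relabel)

theorem lemma3p5:
  fixes P :: "'p \<Rightarrow> 'a \<Rightarrow> 'p \<Rightarrow> bool" and E :: "'e \<Rightarrow> 'a \<Rightarrow> 'e \<Rightarrow> bool"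
    and p q :: 'p and e :: 'e
  shows "((param_simulatable P E e p q \<longleftrightarrow> simulatable (rdjoin_lts P E) (p, e) (q, e))
       \<and> (simulatable (rdjoin_lts P E) (p, e) (q, e) \<longrightarrow> simulatable (join_lts P E) (p, e) (q, e))
       \<and> (simulatable (join_lts P E) (p, e) (q, e) \<longleftrightarrow> ji_simulatable P E e p q))
     \<and> ((param_bisimilar P E e p q \<longleftrightarrow> bisimilar (rdjoin_lts P E) (p, e) (q, e))
       \<and> (bisimilar (rdjoin_lts P E) (p, e) (q, e) \<longrightarrow> bisimilar (join_lts P E) (p, e) (q, e))
       \<and> (bisimilar (join_lts P E) (p, e) (q, e) \<longleftrightarrow> ji_bisimilar P E e p q))"
  by (simp add: param_simulatable_iff_rdjoin param_bisimilar_iff_rdjoin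
      simulatable_rdjoin_imp_join bisimilar_rdjoin_imp_join ji_simulatable_def ji_bisimilar_def)

end
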